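(* Let $k\ge3$ be an integer and let $n$ be such that $x_k(n-1)\ge \frac{26}{\sqrt{\alpha_k}}$. Then $$1-\Theta_M(n)\ge \frac{\sqrt{\alpha_k}\,\pi^4}{36\,x_k(n+1)^3}.$$
   Context: Let $x_k(n):=\frac{\pi\sqrt{24n-(2k+2)}}{6}$, $\alpha_k:=\frac{5k+2}{2k+1}$, $M_k(n):=\frac{\pi^3\alpha_k}{18x_k(n)^2}I_2(\sqrt{\alpha_k}x_k(n))$ with $I_2$ the modified Bessel function of the first kind of order $2$, and $\Theta_M(n):=\frac{M_k(n-1)M_k(n+1)}{M_k(n)^2}$. *)

theory Defs
  imports "HOL-Analysis.Analysis"
begin

definition besselI :: "nat \<Rightarrow> real \<Rightarrow> real" where
  "besselI \<nu> x = (\<Sum>m. (x / 2) ^ (2 * m + \<nu>) / (fact m * fact (m + \<nu>)))"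

definition xk :: "int \<Rightarrow> real \<Rightarrow> real" where
  "xk k n = pi * sqrt (24 * n - (2 * of_int k + 2)) / 6"

definition alphak :: "int \<Rightarrow> real" where
  "alphak k = (5 * of_int k + 2) / (2 * of_int k + 1)"

definition Mk :: "int \<Rightarrow> real \<Rightarrow> real" where
  "Mk k n = pi ^ 3 * alphak k / (18 * (xk k n) ^ 2) * besselI 2 (sqrt (alphak k) * xk k n)"

definition ThetaM :: "int \<Rightarrow> real \<Rightarrow> real" where
  "ThetaM k n = Mk k (n - 1) * Mk k (n + 1) / (Mk k n) ^ 2"

end

theory Submission
  imports Defs
begin

(* Write P_nu(t) = sum_m t^m / (m! (m + nu)!), so that I_2(y) = (y/2)^2 P_2((y/2)^2).
   Then M_k(m) is a constant multiple of P_2(t_k(m)) with t_k(m) = alpha_k x_k(m)^2 / 4, which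
   is affine in m with slope delta = alpha_k pi^2 / 6. Hence
   Theta_M(n) = P_2(v - delta) P_2(v + delta) / P_2(v)^2, and the claim is a quantitative
   log-concavity of P_2. Its logarithmic derivative q = P_3 / P_2 satisfies the Riccati equation
   q' = (1 - 3q)/t - q^2 (because P_2 = 3 P_3 + t P_4); a first-crossing argument gives
   q(s^2) > 1/s - 13/(10 s^2), and substituting this back yields q'(t) <= -1/(6 t^(3/2)) for
   t >= 169. Integrating twice bounds ln Theta_M(n) by -delta^2 / (6 w^(3/2)) with w = v + delta,
   and 1 - exp(-z) >= 3z/4 for 0 <= z <= 1/3 finishes the proof. *)

lemma pos_if_deriv_pos_at_zeros:
  fixes g :: "real \<Rightarrow> real"
  assumes cont: "continuous_on {a..} g" and "0 < g a"
    and up: "\<And>x. a < x \<Longrightarrow> g x = 0 \<Longrightarrow> \<exists>D>0. (g has_real_derivative D) (at x)"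
    and "a \<le> t"
  shows "0 < g t"
proof (rule ccontr)
  assume "\<not> 0 < g t"
  have cont_ivl: "continuous_on {a..x} g" for x
    using cont by (rule continuous_on_subset) auto
  define Z where "Z = {x \<in> {a..t}. g x = 0}"
  have "Z \<noteq> {}"
    using IVT2'[of g t 0 a, OF _ _ _ cont_ivl] \<open>\<not> 0 < g t\<close> \<open>0 < g a\<close> \<open>a \<le> t\<close>
    by (force simp: Z_def)
  moreover have "bdd_below Z"
    by (auto simp: Z_def intro: bdd_belowI)
  moreover have "closed Z"
    unfolding Z_def using cont_ivl by (rule continuous_closed_preimage_constant) simp
  ultimately have "Inf Z \<in> Z"
    by (rule closed_contains_Inf)
  define t0 where "t0 = Inf Z"
  have "a < t0" "t0 \<le> t" "g t0 = 0"
    using \<open>Inf Z \<in> Z\<close> \<open>0 < g a\<close> by (auto simp: Z_def t0_def order.order_iff_strict)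
  obtain D where "0 < D" "(g has_real_derivative D) (at t0)"
    using up[OF \<open>a < t0\<close> \<open>g t0 = 0\<close>] by blast
  then obtain d where "0 < d" and dec: "\<And>h. 0 < h \<Longrightarrow> h < d \<Longrightarrow> g (t0 - h) < g t0"
    using DERIV_pos_inc_left by blast
  define h where "h = min (d / 2) (t0 - a)"
  have "0 < h" "h < d" "a \<le> t0 - h"
    using \<open>0 < d\<close> \<open>a < t0\<close> by (auto simp: h_def)
  then obtain y where "a \<le> y" "y \<le> t0 - h" "g y = 0"
    using IVT2'[of g "t0 - h" 0 a, OF _ _ _ cont_ivl] dec \<open>0 < g a\<close> \<open>g t0 = 0\<close> by force
  then have "y \<in> Z"
    using \<open>t0 \<le> t\<close> \<open>0 < h\<close> by (simp add: Z_def)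
  then have "t0 \<le> y"
    unfolding t0_def using \<open>bdd_below Z\<close> by (rule cInf_lower)
  then show False
    using \<open>y \<le> t0 - h\<close> \<open>0 < h\<close> by simp
qed

lemma symmetric_difference_le_of_deriv_le:
  fixes f f' :: "real \<Rightarrow> real"
  assumes "0 \<le> \<delta>"
    and f': "\<And>t. v - \<delta> \<le> t \<Longrightarrow> t \<le> v + \<delta> \<Longrightarrow> (f has_real_derivative f' t) (at t)"
    and f'_le: "\<And>t. v - \<delta> \<le> t \<Longrightarrow> t \<le> v + \<delta> \<Longrightarrow> f' t \<le> - \<kappa>"
  shows "f (v + \<delta>) - f (v - \<delta>) \<le> - 2 * \<kappa> * \<delta>"
proof (cases "\<delta> = 0")
  case False
  then obtain z where "v - \<delta> < z" "z < v + \<delta>" "f (v + \<delta>) - f (v - \<delta>) = 2 * \<delta> * f' z"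
    using MVT2[of "v - \<delta>" "v + \<delta>" f f'] f' \<open>0 \<le> \<delta>\<close> by auto
  then show ?thesis
    using f'_le[of z] \<open>0 \<le> \<delta>\<close> mult_left_mono[of "f' z" "- \<kappa>" "2 * \<delta>"] by simp
qed simp

lemma second_difference_le_of_deriv2_le:
  fixes f f' f'' :: "real \<Rightarrow> real"
  assumes "0 \<le> \<delta>"
    and f': "\<And>t. v - \<delta> \<le> t \<Longrightarrow> t \<le> v + \<delta> \<Longrightarrow> (f has_real_derivative f' t) (at t)"
    and f'': "\<And>t. v - \<delta> \<le> t \<Longrightarrow> t \<le> v + \<delta> \<Longrightarrow> (f' has_real_derivative f'' t) (at t)"
    and f''_le: "\<And>t. v - \<delta> \<le> t \<Longrightarrow> t \<le> v + \<delta> \<Longrightarrow> f'' t \<le> - \<kappa>"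
  shows "f (v + \<delta>) + f (v - \<delta>) - 2 * f v \<le> - \<kappa> * \<delta>\<^sup>2"
proof -
  define K where "K s = f (v + s) + f (v - s) - 2 * f v + \<kappa> * s\<^sup>2" for s
  have "K \<delta> \<le> K 0"
  proof (rule DERIV_nonpos_imp_nonincreasing[OF \<open>0 \<le> \<delta>\<close>])
    fix s
    assume "0 \<le> s" "s \<le> \<delta>"
    have "((\<lambda>s. f (v + s)) has_real_derivative f' (v + s)) (at s)"
      using DERIV_chain2[OF f' DERIV_add[OF DERIV_const DERIV_ident]] \<open>0 \<le> s\<close> \<open>s \<le> \<delta>\<close> by simp
    moreover have "((\<lambda>s. f (v - s)) has_real_derivative f' (v - s) * - 1) (at s)"
      using DERIV_chain2[OF f' DERIV_diff[OF DERIV_const DERIV_ident]] \<open>0 \<le> s\<close> \<open>s \<le> \<delta>\<close> by simp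
    ultimately have "(K has_real_derivative f' (v + s) - f' (v - s) + 2 * \<kappa> * s) (at s)"
      unfolding K_def[abs_def] by (auto intro!: derivative_eq_intros)
    moreover have "f' (v + s) - f' (v - s) \<le> - 2 * \<kappa> * s"
      using \<open>0 \<le> s\<close> \<open>s \<le> \<delta>\<close> f'' f''_le by (intro symmetric_difference_le_of_deriv_le[where f = f' and f' = f'']) auto
    ultimately show "\<exists>y. (K has_real_derivative y) (at s) \<and> y \<le> 0"
      by (intro exI conjI) auto
  qed
  then show ?thesis
    by (simp add: K_def)
qed

lemma one_minus_exp_neg_ge:
  fixes z :: real
  assumes "0 \<le> z" "z \<le> 1 / 3"
  shows "3 / 4 * z \<le> 1 - exp (- z)"
proof -
  have "exp (- z) \<le> 1 / (1 + z)"
    using exp_ge_add_one_self[of z] assms by (simp add: exp_minus field_simps)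
  moreover have "3 / 4 * z \<le> 1 - 1 / (1 + z)"
    using assms mult_left_mono[of "3 * z" 1 z] by (simp add: field_simps)
  ultimately show ?thesis
    by linarith
qed

definition besselP :: "nat \<Rightarrow> real \<Rightarrow> real" where
  "besselP \<nu> t = (\<Sum>m. t ^ m / (fact m * fact (m + \<nu>)))"

lemma summable_besselP: "summable (\<lambda>m. t ^ m / (fact m * fact (m + \<nu>)) :: real)"
proof (rule summable_comparison_test[OF _ summable_exp[of "\<bar>t\<bar>"]])
  have "\<bar>t\<bar> ^ m / (fact m * fact (m + \<nu>)) \<le> \<bar>t\<bar> ^ m / fact m" for m
    by (intro divide_left_mono) (auto simp: mult_le_cancel_left1)
  then show "\<exists>N. \<forall>m\<ge>N. norm (t ^ m / (fact m * fact (m + \<nu>))) \<le> inverse (fact m) * \<bar>t\<bar> ^ m"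
    by (simp add: power_abs field_split_simps)
qed

lemma sums_besselP: "(\<lambda>m. t ^ m / (fact m * fact (m + \<nu>))) sums besselP \<nu> t"
  unfolding besselP_def using summable_besselP by (rule summable_sums)

lemma besselP_pos: "0 \<le> t \<Longrightarrow> 0 < besselP \<nu> t"
  unfolding besselP_def by (rule suminf_pos2[OF summable_besselP, of _ _ 0]) auto

lemma has_real_derivative_besselP: "(besselP \<nu> has_real_derivative besselP (Suc \<nu>) t) (at t)"
proof -
  define c where "c m = 1 / (fact m * fact (m + \<nu>) :: real)" for m
  have "diffs c m = 1 / (fact m * fact (m + Suc \<nu>))" for m
    by (simp add: diffs_def c_def del: of_nat_Suc)
  moreover have "besselP \<nu> = (\<lambda>t. \<Sum>m. c m * t ^ m)"
    by (simp add: besselP_def c_def fun_eq_iff)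
  moreover have "summable (\<lambda>m. c m * y ^ m)" for y
    using summable_besselP[of y \<nu>] by (simp add: c_def)
  ultimately show ?thesis
    using termdiffs_strong_converges_everywhere[of c t] by (simp add: besselP_def)
qed

lemma besselP_recurrence:
  "besselP \<nu> t = (real \<nu> + 1) * besselP (\<nu> + 1) t + t * besselP (\<nu> + 2) t"
proof -
  define f where "f m = m * t ^ m / (fact m * fact (m + (\<nu> + 1)))" for m
  have f_Suc: "f (Suc m) = t * (t ^ m / (fact m * fact (m + (\<nu> + 2))))" for m
    by (simp add: f_def del: of_nat_Suc)
  have "(\<lambda>m. f (Suc m)) sums (t * besselP (\<nu> + 2) t)"
    unfolding f_Suc by (rule sums_mult[OF sums_besselP])
  moreover have "f 0 = 0"
    by (simp add: f_def)
  ultimately have "f sums (t * besselP (\<nu> + 2) t)"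
    by (simp add: sums_Suc_iff)
  then have "(\<lambda>m. (\<nu> + 1) * (t ^ m / (fact m * fact (m + (\<nu> + 1)))) + f m) sums
      ((\<nu> + 1) * besselP (\<nu> + 1) t + t * besselP (\<nu> + 2) t)"
    by (intro sums_add sums_mult sums_besselP)
  moreover have "(\<nu> + 1) * (t ^ m / (fact m * fact (m + (\<nu> + 1)))) + f m
      = t ^ m / (fact m * fact (m + \<nu>))" for m
  proof -
    define c where "c = real m + \<nu> + 1"
    have "c \<noteq> 0"
      by (simp add: c_def add_pos_nonneg)
    have denom: "fact m * fact (m + (\<nu> + 1)) = c * (fact m * fact (m + \<nu>))"
      by (simp add: c_def algebra_simps)
    have "(\<nu> + 1) * (t ^ m / (fact m * fact (m + (\<nu> + 1)))) + f m
        = c * t ^ m / (fact m * fact (m + (\<nu> + 1)))"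
      by (simp add: f_def c_def add_divide_distrib algebra_simps)
    then show ?thesis
      unfolding denom using \<open>c \<noteq> 0\<close> by simp
  qed
  ultimately show ?thesis
    using sums_unique2[OF sums_besselP] by simp
qed

lemma besselI_eq_besselP: "besselI \<nu> y = (y / 2) ^ \<nu> * besselP \<nu> ((y / 2) ^ 2)"
proof -
  have "(y / 2) ^ (2 * m + \<nu>) / (fact m * fact (m + \<nu>))
      = (y / 2) ^ \<nu> * (((y / 2) ^ 2) ^ m / (fact m * fact (m + \<nu>)))" for m
    by (simp add: power_add power_mult)
  then show ?thesis
    unfolding besselI_def using sums_unique[OF sums_mult[OF sums_besselP]] by simp
qed

definition besselP_ratio :: "nat \<Rightarrow> real \<Rightarrow> real" where
  "besselP_ratio \<nu> t = besselP (\<nu> + 1) t / besselP \<nu> t"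

lemma besselP_ratio_pos: "0 \<le> t \<Longrightarrow> 0 < besselP_ratio \<nu> t"
  by (simp add: besselP_ratio_def besselP_pos)

lemma has_real_derivative_ln_besselP:
  assumes "0 \<le> t"
  shows "((\<lambda>t. ln (besselP \<nu> t)) has_real_derivative besselP_ratio \<nu> t) (at t)"
  using DERIV_chain2[OF DERIV_ln_divide[OF besselP_pos[OF assms]] has_real_derivative_besselP]
  by (simp add: besselP_ratio_def)

lemma has_real_derivative_besselP_ratio:
  assumes "0 < t"
  shows "(besselP_ratio \<nu> has_real_derivative
            (1 - (real \<nu> + 1) * besselP_ratio \<nu> t) / t - besselP_ratio \<nu> t ^ 2) (at t)"
proof -
  define a b c where "a = besselP \<nu> t" and "b = besselP (\<nu> + 1) t" and "c = besselP (\<nu> + 2) t"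
  have "0 < a"
    using assms by (simp add: a_def besselP_pos)
  have "a = (real \<nu> + 1) * b + t * c"
    unfolding a_def b_def c_def by (rule besselP_recurrence)
  then have c_eq: "c = (a - (real \<nu> + 1) * b) / t"
    using assms by (simp add: field_simps)
  have "(c * a - b * b) / (a * a) = (1 - (real \<nu> + 1) * (b / a)) / t - (b / a) ^ 2"
    unfolding c_eq using \<open>0 < a\<close> assms by (simp add: field_simps power2_eq_square)
  moreover have "(besselP_ratio \<nu> has_real_derivative (c * a - b * b) / (a * a)) (at t)"
    unfolding besselP_ratio_def[abs_def] a_def b_def c_def
    using DERIV_divide[OF has_real_derivative_besselP has_real_derivative_besselP] \<open>0 < a\<close>
    by (simp add: a_def)
  ultimately show ?thesis
    by (simp add: besselP_ratio_def a_def b_def)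
qed

lemma besselP_ratio_2_lower_bound:
  assumes "0 < s"
  shows "1 / s - 13 / (10 * s\<^sup>2) < besselP_ratio 2 (s\<^sup>2)"
proof -
  define \<phi> where "\<phi> s = 1 / s - 13 / (10 * s\<^sup>2)" for s :: real
  define g where "g s = besselP_ratio 2 (s\<^sup>2) - \<phi> s" for s
  have g_deriv: "(g has_real_derivative
      2 * s * ((1 - 3 * besselP_ratio 2 (s\<^sup>2)) / s\<^sup>2 - besselP_ratio 2 (s\<^sup>2) ^ 2)
      - (13 / (5 * s ^ 3) - 1 / s\<^sup>2)) (at s)" if "0 < s" for s
  proof -
    have "((\<lambda>s. besselP_ratio 2 (s\<^sup>2)) has_real_derivative
        2 * s * ((1 - 3 * besselP_ratio 2 (s\<^sup>2)) / s\<^sup>2 - besselP_ratio 2 (s\<^sup>2) ^ 2)) (at s)"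
      using DERIV_chain2[OF has_real_derivative_besselP_ratio[of "s\<^sup>2" 2] DERIV_pow[of 2 s]] that
      by (simp add: mult.commute)
    moreover have "(\<phi> has_real_derivative 13 / (5 * s ^ 3) - 1 / s\<^sup>2) (at s)"
      unfolding \<phi>_def[abs_def] using that
      by (auto intro!: derivative_eq_intros simp: field_simps power2_eq_square power3_eq_cube)
    ultimately show ?thesis
      unfolding g_def[abs_def] by (rule DERIV_diff)
  qed
  have "0 < g s" if "13 / 10 \<le> s" for s
  proof (rule pos_if_deriv_pos_at_zeros[OF _ _ _ that])
    show "continuous_on {13 / 10..} g"
    proof (intro continuous_at_imp_continuous_on ballI)
      fix x :: real
      assume "x \<in> {13 / 10..}"
      then show "isCont g x"
        using g_deriv[of x] DERIV_isCont by force
    qed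
    show "0 < g (13 / 10)"
      by (simp add: g_def \<phi>_def besselP_ratio_pos power2_eq_square)
    fix x :: real
    assume "13 / 10 < x" "g x = 0"
    then have "besselP_ratio 2 (x\<^sup>2) = \<phi> x" "0 < x"
      by (auto simp: g_def)
    moreover have "2 * x * ((1 - 3 * \<phi> x) / x\<^sup>2 - \<phi> x ^ 2) - (13 / (5 * x ^ 3) - 1 / x\<^sup>2)
        = 1 / (5 * x\<^sup>2) + 91 / (50 * x ^ 3)"
      using \<open>0 < x\<close> by (simp add: \<phi>_def field_simps power2_eq_square power3_eq_cube)
    ultimately show "\<exists>D>0. (g has_real_derivative D) (at x)"
      using g_deriv[OF \<open>0 < x\<close>] by (intro exI[of _ "1 / (5 * x\<^sup>2) + 91 / (50 * x ^ 3)"]) (simp add: add_pos_pos)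
  qed
  moreover have "\<phi> s \<le> 0" if "s \<le> 13 / 10"
    using assms that by (simp add: \<phi>_def field_simps power2_eq_square)
  ultimately show ?thesis
    using besselP_ratio_pos[of "s\<^sup>2" 2] by (force simp: g_def \<phi>_def)
qed

lemma besselP_ratio_2_deriv_le:
  assumes "169 \<le> t"
  shows "(1 - 3 * besselP_ratio 2 t) / t - besselP_ratio 2 t ^ 2 \<le> - 1 / (6 * t * sqrt t)"
proof -
  define s where "s = sqrt t"
  have "13 \<le> s"
    using real_sqrt_le_mono[OF assms] by (simp add: s_def)
  have t_eq: "t = s\<^sup>2"
    using assms by (simp add: s_def)
  define \<phi> where "\<phi> = 1 / s - 13 / (10 * s\<^sup>2)"
  have "0 < \<phi>"
    using \<open>13 \<le> s\<close> by (simp add: \<phi>_def field_simps power2_eq_square)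
  moreover have "\<phi> < besselP_ratio 2 t"
    unfolding \<phi>_def t_eq using \<open>13 \<le> s\<close> by (intro besselP_ratio_2_lower_bound) simp
  ultimately have "(1 - 3 * besselP_ratio 2 t) / t - besselP_ratio 2 t ^ 2 \<le> (1 - 3 * \<phi>) / t - \<phi>\<^sup>2"
    using assms by (intro diff_mono divide_right_mono power_mono) auto
  also have "\<dots> = - 2 / (5 * s ^ 3) + 221 / (100 * s ^ 4)"
    using \<open>13 \<le> s\<close> by (simp add: t_eq \<phi>_def field_simps power2_eq_square power3_eq_cube power4_eq_xxxx)
  also have "\<dots> \<le> - 1 / (6 * s ^ 3)"
    using \<open>13 \<le> s\<close> by (simp add: field_simps power3_eq_cube power4_eq_xxxx)
  also have "\<dots> = - 1 / (6 * t * sqrt t)"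
    using \<open>13 \<le> s\<close> by (simp add: t_eq s_def[symmetric] power3_eq_cube power2_eq_square)
  finally show ?thesis .
qed

lemma ln_besselP_2_second_difference_le:
  assumes "0 \<le> \<delta>" "169 \<le> v - \<delta>"
  shows "ln (besselP 2 (v + \<delta>)) + ln (besselP 2 (v - \<delta>)) - 2 * ln (besselP 2 v)
           \<le> - (1 / (6 * (v + \<delta>) * sqrt (v + \<delta>))) * \<delta>\<^sup>2"
proof (rule second_difference_le_of_deriv2_le[OF \<open>0 \<le> \<delta>\<close>])
  fix t
  assume t: "v - \<delta> \<le> t" "t \<le> v + \<delta>"
  then show "((\<lambda>t. ln (besselP 2 t)) has_real_derivative besselP_ratio 2 t) (at t)"
    using assms by (intro has_real_derivative_ln_besselP) simp
  show "(besselP_ratio 2 has_real_derivative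
      (1 - (real 2 + 1) * besselP_ratio 2 t) / t - besselP_ratio 2 t ^ 2) (at t)"
    using t assms by (intro has_real_derivative_besselP_ratio) simp
  have "t * sqrt t \<le> (v + \<delta>) * sqrt (v + \<delta>)"
    using t assms by (intro mult_mono real_sqrt_le_mono) auto
  moreover have "0 < t * sqrt t"
    using t assms by simp
  ultimately have "1 / (6 * (v + \<delta>) * sqrt (v + \<delta>)) \<le> 1 / (6 * t * sqrt t)"
    unfolding mult.assoc by (intro frac_le) auto
  then show "(1 - (real 2 + 1) * besselP_ratio 2 t) / t - besselP_ratio 2 t ^ 2
      \<le> - (1 / (6 * (v + \<delta>) * sqrt (v + \<delta>)))"
    using besselP_ratio_2_deriv_le[of t] t assms by simp
qed

lemma besselP_2_turan_gap:
  assumes "0 < \<delta>" "\<delta> \<le> 5" "169 \<le> v - \<delta>"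
  shows "\<delta>\<^sup>2 / (8 * (v + \<delta>) * sqrt (v + \<delta>))
           \<le> 1 - besselP 2 (v - \<delta>) * besselP 2 (v + \<delta>) / besselP 2 v ^ 2"
proof -
  define w where "w = v + \<delta>"
  define z where "z = \<delta>\<^sup>2 / (6 * w * sqrt w)"
  have "0 < w" "13 \<le> sqrt w"
    using real_sqrt_le_mono[of 169 w] assms by (auto simp: w_def)
  have "ln (besselP 2 (v + \<delta>)) + ln (besselP 2 (v - \<delta>)) - 2 * ln (besselP 2 v) \<le> - z"
    using ln_besselP_2_second_difference_le[of \<delta> v] assms by (simp add: z_def w_def)
  then have "exp (ln (besselP 2 (v + \<delta>)) + ln (besselP 2 (v - \<delta>)) - 2 * ln (besselP 2 v)) \<le> exp (- z)"
    by simp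
  moreover have "exp (ln B + ln A - 2 * ln C) = A * B / C ^ 2" if "0 < A" "0 < B" "0 < C" for A B C :: real
    using that by (simp only: exp_diff exp_add mult_2 exp_ln) (simp add: power2_eq_square)
  ultimately have "besselP 2 (v - \<delta>) * besselP 2 (v + \<delta>) / besselP 2 v ^ 2 \<le> exp (- z)"
    using assms by (simp add: besselP_pos)
  moreover have "z \<le> 1 / 3"
  proof -
    have "6 * 169 * 13 \<le> 6 * w * sqrt w"
      using \<open>13 \<le> sqrt w\<close> assms by (intro mult_mono) (auto simp: w_def)
    moreover have "\<delta>\<^sup>2 \<le> 25"
      using assms power_mono[of \<delta> 5 2] by simp
    ultimately show ?thesis
      by (simp add: z_def field_simps)
  qed
  moreover have "3 / 4 * z = \<delta>\<^sup>2 / (8 * w * sqrt w)"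
    using \<open>0 < w\<close> by (simp add: z_def field_simps)
  moreover have "0 \<le> z"
    using \<open>0 < w\<close> by (simp add: z_def)
  ultimately show ?thesis
    using one_minus_exp_neg_ge[of z] by (simp add: w_def)
qed

definition tk :: "int \<Rightarrow> real \<Rightarrow> real" where
  "tk k m = alphak k * xk k m ^ 2 / 4"

lemma alphak_pos: "0 \<le> k \<Longrightarrow> 0 < alphak k"
  by (simp add: alphak_def)

lemma alphak_le: "0 \<le> k \<Longrightarrow> alphak k \<le> 5 / 2"
  by (simp add: alphak_def field_simps)

lemma alphak_pi_sq_le:
  assumes "0 \<le> k"
  shows "alphak k * pi\<^sup>2 / 6 \<le> 5"
proof -
  have "pi\<^sup>2 \<le> (16 / 5)\<^sup>2"
    using pi_approx by (intro power_mono) auto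
  then show ?thesis
    using alphak_pos[OF assms] alphak_le[OF assms]
      mult_mono[of "alphak k" "5 / 2" "pi\<^sup>2" "(16 / 5)\<^sup>2"]
    by (simp add: power2_eq_square)
qed

lemma xk_pos_iff: "0 < xk k m \<longleftrightarrow> 0 < 24 * m - (2 * of_int k + 2)"
  by (simp add: xk_def zero_less_mult_iff)

lemma xk_pos_mono: "0 < xk k m \<Longrightarrow> m \<le> m' \<Longrightarrow> 0 < xk k m'"
  by (simp add: xk_pos_iff)

lemma xk_sq:
  "0 \<le> 24 * m - (2 * of_int k + 2) \<Longrightarrow> xk k m ^ 2 = pi\<^sup>2 * (24 * m - (2 * of_int k + 2)) / 36"
  by (simp add: xk_def power_divide power_mult_distrib)

lemma tk_shift:
  assumes "0 < xk k m" "0 < xk k m'"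
  shows "tk k m' = tk k m + alphak k * pi\<^sup>2 / 6 * (m' - m)"
  using assms by (simp add: tk_def xk_pos_iff xk_sq field_simps)

lemma tk_ge_169:
  assumes "0 < alphak k" "26 / sqrt (alphak k) \<le> xk k m"
  shows "169 \<le> tk k m"
proof -
  have "(26 / sqrt (alphak k)) ^ 2 \<le> xk k m ^ 2"
    using assms by (intro power_mono) simp_all
  then show ?thesis
    using assms(1) by (simp add: tk_def power_divide field_simps)
qed

lemma Mk_eq_besselP:
  assumes "0 \<le> alphak k" "xk k m \<noteq> 0"
  shows "Mk k m = pi ^ 3 * alphak k ^ 2 / 72 * besselP 2 (tk k m)"
proof -
  have "(sqrt (alphak k) * xk k m / 2) ^ 2 = tk k m"
    using assms by (simp add: tk_def power_divide power_mult_distrib)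
  then show ?thesis
    using assms by (simp add: Mk_def tk_def besselI_eq_besselP field_simps power2_eq_square power3_eq_cube)
qed

lemma ThetaM_eq_besselP_2:
  assumes "0 < alphak k" "0 < xk k (m - 1)"
  defines "\<delta> \<equiv> alphak k * pi\<^sup>2 / 6"
  shows "ThetaM k m = besselP 2 (tk k m - \<delta>) * besselP 2 (tk k m + \<delta>) / besselP 2 (tk k m) ^ 2"
proof -
  have pos: "0 < xk k m" "0 < xk k (m + 1)"
    using xk_pos_mono[OF assms(2)] by simp_all
  have "tk k (m - 1) = tk k m - \<delta>" "tk k (m + 1) = tk k m + \<delta>"
    using tk_shift[OF pos(1) assms(2)] tk_shift[OF pos(1) pos(2)] by (simp_all add: \<delta>_def)
  then have Mk_eqs: "Mk k (m - 1) = pi ^ 3 * alphak k ^ 2 / 72 * besselP 2 (tk k m - \<delta>)"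
      "Mk k m = pi ^ 3 * alphak k ^ 2 / 72 * besselP 2 (tk k m)"
      "Mk k (m + 1) = pi ^ 3 * alphak k ^ 2 / 72 * besselP 2 (tk k m + \<delta>)"
    using Mk_eq_besselP assms(1,2) pos by (metis less_imp_le less_irrefl)+
  have "0 < besselP 2 (tk k m)"
    using assms(1) by (simp add: besselP_pos tk_def)
  then show ?thesis
    unfolding ThetaM_def Mk_eqs using assms(1) by (simp add: field_simps power2_eq_square)
qed

lemma sqrt_alphak_pi4_div_xk_cube:
  assumes "0 < alphak k" "0 < xk k m"
  shows "sqrt (alphak k) * pi ^ 4 / (36 * xk k m ^ 3)
           = (alphak k * pi\<^sup>2 / 6)\<^sup>2 / (8 * tk k m * sqrt (tk k m))"
proof -
  define x r where "x = xk k m" and "r = sqrt (alphak k)"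
  have "0 < x" "0 < r" "alphak k = r\<^sup>2"
    using assms by (simp_all add: x_def r_def)
  moreover have "sqrt (r\<^sup>2 * x\<^sup>2 / 4) = r * x / 2"
    using \<open>0 < x\<close> \<open>0 < r\<close> by (simp add: real_sqrt_divide real_sqrt_mult)
  ultimately show ?thesis
    unfolding tk_def x_def[symmetric] r_def[symmetric]
    by (simp add: field_simps power2_eq_square power3_eq_cube power4_eq_xxxx)
qed

theorem lemma4p3:
  fixes k :: int and n :: nat
  assumes "k \<ge> 3"
    and "xk k (real n - 1) \<ge> 26 / sqrt (alphak k)"
  shows "1 - ThetaM k (real n) \<ge> sqrt (alphak k) * pi ^ 4 / (36 * (xk k (real n + 1)) ^ 3)"
proof -
  define \<delta> where "\<delta> = alphak k * pi\<^sup>2 / 6"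
  have "0 < alphak k" "\<delta> \<le> 5"
    using assms(1) alphak_pos alphak_pi_sq_le by (simp_all add: \<delta>_def)
  moreover have "0 < 26 / sqrt (alphak k)"
    using \<open>0 < alphak k\<close> by simp
  ultimately have "0 < xk k (real n - 1)" "0 < \<delta>"
    using assms(2) by (linarith, simp add: \<delta>_def)
  then have "0 < xk k n" "0 < xk k (real n + 1)"
    using xk_pos_mono by auto
  have "169 \<le> tk k n - \<delta>"
    using tk_ge_169[OF \<open>0 < alphak k\<close> assms(2)] tk_shift[OF \<open>0 < xk k n\<close> \<open>0 < xk k (real n - 1)\<close>]
    by (simp add: \<delta>_def)
  moreover have "tk k (real n + 1) = tk k n + \<delta>"
    using tk_shift[OF \<open>0 < xk k n\<close> \<open>0 < xk k (real n + 1)\<close>] by (simp add: \<delta>_def)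
  ultimately show ?thesis
    using besselP_2_turan_gap[OF \<open>0 < \<delta>\<close> \<open>\<delta> \<le> 5\<close>]
      ThetaM_eq_besselP_2[OF \<open>0 < alphak k\<close> \<open>0 < xk k (real n - 1)\<close>]
      sqrt_alphak_pi4_div_xk_cube[OF \<open>0 < alphak k\<close> \<open>0 < xk k (real n + 1)\<close>]
    by (simp add: \<delta>_def)
qed

end
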